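(* Let $y\in\mathbb{R}^N$, let $H$ be a real $N\times p$ matrix ($N\le p$) with $\operatorname{rank}(H)=N$ and largest singular value equal to $1$, let $\gamma^2>0$, $\epsilon^2>0$, $\sigma^2>0$ be given constants, and let $p_{q}$ be the Markov tree prior probability mass function on $\{0,1\}^p$ described in the context. For $q=(q_1,\dots,q_p)\in\{0,1\}^p$ set $$D(q)=\operatorname{diag}\bigl((\gamma^2)^{q_1}(\epsilon^2)^{1-q_1},\dots,(\gamma^2)^{q_p}(\epsilon^2)^{1-q_p}\bigr).$$ Consider the EM iteration on $\theta=(q,s)\in\{0,1\}^p\times\mathbb{R}^p$, $j=0,1,2,\dots$: E step: $z^{(j)}=s^{(j)}+H^T(y-Hs^{(j)})$; M step: $\theta^{(j+1)}=(q^{(j+1)},s^{(j+1)})\in\arg\max_{(q,s)}\Bigl\{-\tfrac12\,\frac{\|z^{(j)}-s\|_2^2+s^TD(q)^{-1}s}{\sigma^2}+\ln p_{q}(q)+\tfrac12\ln\bigl(\tfrac{\epsilon^2}{\gamma^2}\bigr)\sum_{i=1}^p q_i\Bigr\}$. Then the signal and binary state variable estimates $s^{(+\infty)}$ and $q^{(+\infty)}$ obtained upon convergence of this iteration (i.e., at a fixed point of the E and M steps) satisfy $$s^{(+\infty)}=\bar s(q^{(+\infty)}),\qquad\text{where }\ \bar s(q)=D(q)H^T\bigl[I_N+HD(q)H^T\bigr]^{-1}y .$$ Thus the iteration provides an estimate $q^{(+\infty)}$ of the state variables together with the solution $\bar s(q^{(+\infty)})$ of the corresponding linear system as the signal esti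mate.
   Context: Setting: measurements $y=Hs+$ noise with likelihood $\mathcal N(y\mid Hs,\sigma^2 I_N)$; signal prior $s\mid q,\sigma^2\sim\mathcal N(0,\sigma^2 D(q))$, so $q_i=1$ (resp. $0$) marks large (resp. small) coefficients. The prior $p_q$: the indices $\{1,\dots,p\}$ correspond bijectively (via a fixed map $\upsilon$) to the positions $(i_1,i_2)$ of a $\rho\times\kappa$ array of two-dimensional wavelet coefficients with $L$ decomposition levels. The approximation set is $\mathcal A=\upsilon(\{1,\dots,\rho/2^L\}\times\{1,\dots,\kappa/2^L\})$, the root set is $\mathcal T_{\mathrm{root}}=\upsilon(\{1,\dots,\rho/2^{L-1}\}\times\{1,\dots,\kappa/2^{L-1}\})\setminus\mathcal A$, and the tree set is $\mathcal T=\{1,\dots,p\}\setminus\mathcal A$. The node at $(i_1,i_2)$ is the parent $\pi(\cdot)$ of the four nodes $(2i_1-1,2i_2-1),(2i_1-1,2i_2),(2i_1,2i_2-1),(2i_1,2i_2)$. Given constants $P_{\mathrm{root}},P_{\mathrm H},P_{\mathrm L}\in(0,1)$: $\Pr\{q_i=1\}=1$ for $i\in\mathcal A$; $\Pr\{q_i=1\}=P_{\mathrm{root}}$ independently for $i\in\mathcal T_{\mathrm{root}}$; and for $i\in\mathcal T\setminus\mathcal T_{\mathrm{root}}$, $\Pr\{q_i=1\mid q_{\pi(i)}\}=P_{\mathrm H}$ if $q_{\pi(i)}=1$ and $P_{\mathrm L}$ if $q_{\pi(i)}=0$ (Markov tree). $\|\cdot\|_2$ is the Euclidean norm. *)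

theory Defs
  imports "HOL-Analysis.Analysis"
begin

text \<open>Prior variance matrix D(q) = diag((gamma2)^{q_i} (eps2)^{1-q_i}); gamma2, eps2 stand for
  the constants gamma^2, epsilon^2.\<close>
definition Dmat :: "real \<Rightarrow> real \<Rightarrow> ('p::finite \<Rightarrow> bool) \<Rightarrow> real^'p^'p" where
  "Dmat gamma2 eps2 q = (\<chi> i j. if i = j then (if q i then gamma2 else eps2) else 0)"

text \<open>Wavelet-array index sets (positions (i1,i2) in {1..rho} x {1..kappa}).\<close>
definition approx_pos :: "nat \<Rightarrow> nat \<Rightarrow> nat \<Rightarrow> (nat \<times> nat) set" where
  "approx_pos rho kappa L = {1..rho div 2^L} \<times> {1..kappa div 2^L}"

definition root_pos :: "nat \<Rightarrow> nat \<Rightarrow> nat \<Rightarrow> (nat \<times> nat) set" where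
  "root_pos rho kappa L =
     ({1..rho div 2^(L-1)} \<times> {1..kappa div 2^(L-1)}) - approx_pos rho kappa L"

text \<open>(i1,i2) is the parent of (2i1-1,2i2-1),(2i1-1,2i2),(2i1,2i2-1),(2i1,2i2).\<close>
definition parent_pos :: "nat \<times> nat \<Rightarrow> nat \<times> nat" where
  "parent_pos ab = ((fst ab + 1) div 2, (snd ab + 1) div 2)"

definition bern :: "real \<Rightarrow> bool \<Rightarrow> real" where
  "bern P b = (if b then P else 1 - P)"

definition markov_tree_prior ::
  "nat \<Rightarrow> nat \<Rightarrow> nat \<Rightarrow> ('p::finite \<Rightarrow> nat \<times> nat) \<Rightarrow> real \<Rightarrow> real \<Rightarrow> real \<Rightarrow> ('p \<Rightarrow> bool) \<Rightarrow> real" where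
  "markov_tree_prior rho kappa L ups Proot PH PL q =
     (\<Prod>i\<in>UNIV.
        if ups i \<in> approx_pos rho kappa L then (if q i then 1 else 0)
        else if ups i \<in> root_pos rho kappa L then bern Proot (q i)
        else bern (if q (inv ups (parent_pos (ups i))) then PH else PL) (q i))"

definition em_objective ::
  "real \<Rightarrow> real \<Rightarrow> real \<Rightarrow> (('p::finite \<Rightarrow> bool) \<Rightarrow> real) \<Rightarrow> real^'p \<Rightarrow> ('p \<Rightarrow> bool) \<Rightarrow> real^'p \<Rightarrow> real" where
  "em_objective gamma2 eps2 sigma2 prior z q s =
     - (1/2) * ((norm (z - s))^2 + s \<bullet> (matrix_inv (Dmat gamma2 eps2 q) *v s)) / sigma2
     + ln (prior q) + (1/2) * ln (eps2 / gamma2) * (\<Sum>i\<in>UNIV. of_bool (q i))"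

definition em_estep :: "real^'p^'n \<Rightarrow> real^'n \<Rightarrow> real^'p \<Rightarrow> real^'p" where
  "em_estep H y s = s + transpose H *v (y - H *v s)"

text \<open>Since ln p_q(q) = -infinity off the support, the maximization ranges over
  the support of the prior.\<close>
definition em_fixed_point ::
  "real^'p^'n \<Rightarrow> real^'n \<Rightarrow> real \<Rightarrow> real \<Rightarrow> real \<Rightarrow> (('p::finite \<Rightarrow> bool) \<Rightarrow> real)
    \<Rightarrow> ('p \<Rightarrow> bool) \<Rightarrow> real^'p \<Rightarrow> bool" where
  "em_fixed_point H y gamma2 eps2 sigma2 prior q s \<longleftrightarrow>
     prior q > 0 \<and>
     (\<forall>q' s'. prior q' > 0 \<longrightarrow>
        em_objective gamma2 eps2 sigma2 prior (em_estep H y s) q' s'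
          \<le> em_objective gamma2 eps2 sigma2 prior (em_estep H y s) q s)"

end

theory Submission
  imports Defs
begin

text \<open>For fixed \<open>q\<close> the M-step objective is a strictly concave, coordinatewise separable quadratic
  in \<open>s\<close>, so at a fixed point its maximiser satisfies \<open>s\<^sub>i + s\<^sub>i / d\<^sub>i = z\<^sub>i\<close>. With the E step
  \<open>z = s + H\<^sup>T r\<close>, \<open>r = y - H s\<close>, this says \<open>s = D H\<^sup>T r\<close>, hence \<open>(I + H D H\<^sup>T) r = r + H s = y\<close>.
  Since \<open>I + H D H\<^sup>T\<close> is positive definite, \<open>r = (I + H D H\<^sup>T)\<^sup>-\<^sup>1 y\<close>.\<close>

definition diag_mat :: "('n::finite \<Rightarrow> 'a::zero) \<Rightarrow> 'a^'n^'n" where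
  "diag_mat d = (\<chi> i j. if i = j then d i else 0)"

lemma Dmat_eq_diag_mat: "Dmat gamma2 eps2 q = diag_mat (\<lambda>i. if q i then gamma2 else eps2)"
  by (simp add: Dmat_def diag_mat_def)

lemma diag_mat_mult_vec:
  fixes d :: "'n::finite \<Rightarrow> 'a::semiring_1"
  shows "diag_mat d *v x = (\<chi> i. d i * x$i)"
  unfolding diag_mat_def matrix_vector_mult_def vec_eq_iff
  by (simp add: if_distrib[of "\<lambda>v. v * _"] cong: if_cong)

lemma diag_mat_mult:
  fixes d e :: "'n::finite \<Rightarrow> 'a::semiring_1"
  shows "diag_mat d ** diag_mat e = diag_mat (\<lambda>i. d i * e i)"
  unfolding diag_mat_def matrix_matrix_mult_def vec_eq_iff
  by (simp add: if_distrib[of "\<lambda>v. v * _"] cong: if_cong)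

lemma diag_mat_one: "diag_mat (\<lambda>_. 1) = mat 1"
  by (simp add: diag_mat_def mat_def)

lemma invertible_matrix_inv:
  fixes A :: "'a::field^'n^'n"
  assumes "invertible A"
  shows "A ** matrix_inv A = mat 1" and "matrix_inv A ** A = mat 1"
proof -
  have "A ** matrix_inv A = mat 1 \<and> matrix_inv A ** A = mat 1"
    using assms unfolding invertible_def matrix_inv_def by (rule someI_ex)
  then show "A ** matrix_inv A = mat 1" and "matrix_inv A ** A = mat 1" by blast+
qed

lemma matrix_inv_eq_left_inverse:
  fixes A B :: "'a::field^'n^'n"
  assumes "B ** A = mat 1"
  shows "matrix_inv A = B"
proof -
  have "invertible A" using assms invertible_left_inverse by blast
  have "matrix_inv A = (B ** A) ** matrix_inv A" by (simp add: assms)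
  also have "\<dots> = B"
    by (metis matrix_mul_assoc matrix_mul_rid invertible_matrix_inv(1)[OF \<open>invertible A\<close>])
  finally show ?thesis .
qed

lemma matrix_inv_diag_mat:
  fixes d :: "'n::finite \<Rightarrow> 'a::field"
  assumes "\<And>i. d i \<noteq> 0"
  shows "matrix_inv (diag_mat d) = diag_mat (\<lambda>i. inverse (d i))"
  by (rule matrix_inv_eq_left_inverse) (simp add: diag_mat_mult assms flip: diag_mat_one)

lemma inner_matrix_inv_diag_mat:
  fixes d :: "'n::finite \<Rightarrow> real"
  assumes "\<And>i. d i \<noteq> 0"
  shows "w \<bullet> (matrix_inv (diag_mat d) *v w) = (\<Sum>j\<in>UNIV. (w$j)^2 / d j)"
  by (simp add: matrix_inv_diag_mat assms diag_mat_mult_vec inner_vec_def power2_eq_square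
      divide_inverse mult_ac)

lemma inner_diag_mat_nonneg:
  fixes d :: "'n::finite \<Rightarrow> real"
  assumes "\<And>i. d i \<ge> 0"
  shows "0 \<le> u \<bullet> (diag_mat d *v u)"
  unfolding diag_mat_mult_vec inner_vec_def
  by (auto intro!: sum_nonneg simp: assms mult.left_commute)

lemma linear_coeff_zero_if_quadratic_nonneg:
  fixes a c :: real
  assumes "c > 0" and "\<And>t. 0 \<le> 2 * t * a + t^2 * c"
  shows "a = 0"
proof -
  have "0 \<le> 2 * (-a/c) * a + (-a/c)^2 * c" by (rule assms(2))
  also have "\<dots> = - (a^2 / c)" using assms(1) by (simp add: field_simps power2_eq_square)
  finally show ?thesis using assms(1) by (simp add: divide_le_0_iff)
qed

lemma penalized_residual_minimizer:
  fixes z s :: "real^'n::finite" and d :: "'n \<Rightarrow> real"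
  assumes d_pos: "\<And>j. d j > 0"
    and min: "\<And>w. norm (z - s)^2 + s \<bullet> (matrix_inv (diag_mat d) *v s)
                  \<le> norm (z - w)^2 + w \<bullet> (matrix_inv (diag_mat d) *v w)"
  shows "s$i + s$i / d i = z$i"
proof -
  define \<phi> where "\<phi> j x = (z$j - x)^2 + x^2 / d j" for j x
  have objective_sum: "norm (z - w)^2 + w \<bullet> (matrix_inv (diag_mat d) *v w) = (\<Sum>j\<in>UNIV. \<phi> j (w$j))"
    for w
  proof -
    have "norm (z - w)^2 = (\<Sum>j\<in>UNIV. (z$j - w$j)^2)"
      unfolding power2_norm_eq_inner inner_vec_def by (simp add: power2_eq_square)
    then show ?thesis
      using d_pos by (simp add: \<phi>_def inner_matrix_inv_diag_mat less_imp_neq[symmetric] sum.distrib)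
  qed
  have "0 \<le> 2 * t * (s$i - z$i + s$i / d i) + t^2 * (1 + 1 / d i)" for t
  proof -
    have "(\<Sum>j\<in>UNIV. \<phi> j ((s + axis i t)$j) - \<phi> j (s$j))
        = (\<Sum>j\<in>UNIV. if j = i then \<phi> i (s$i + t) - \<phi> i (s$i) else 0)"
      by (rule sum.cong) (auto simp: axis_def)
    also have "\<dots> = \<phi> i (s$i + t) - \<phi> i (s$i)" by simp
    also have "\<dots> = 2 * t * (s$i - z$i + s$i / d i) + t^2 * (1 + 1 / d i)"
      using d_pos[of i] by (simp add: \<phi>_def field_simps power2_eq_square)
    finally show ?thesis
      using min[of "s + axis i t"] by (simp add: objective_sum sum_subtractf)
  qed
  then have "s$i - z$i + s$i / d i = 0"
    using d_pos[of i] by (intro linear_coeff_zero_if_quadratic_nonneg[of "1 + 1 / d i"])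
      (auto intro: add_pos_pos)
  then show ?thesis by simp
qed

lemma em_fixed_point_minimizes_in_signal:
  assumes "em_fixed_point H y gamma2 eps2 sigma2 prior q s" and "sigma2 > 0"
  shows "norm (em_estep H y s - s)^2 + s \<bullet> (matrix_inv (Dmat gamma2 eps2 q) *v s)
       \<le> norm (em_estep H y s - w)^2 + w \<bullet> (matrix_inv (Dmat gamma2 eps2 q) *v w)"
proof -
  have "em_objective gamma2 eps2 sigma2 prior (em_estep H y s) q w
      \<le> em_objective gamma2 eps2 sigma2 prior (em_estep H y s) q s"
    using assms(1) unfolding em_fixed_point_def by blast
  then show ?thesis
    using assms(2) by (simp add: em_objective_def divide_le_cancel)
qed

lemma em_fixed_point_signal_eq:
  assumes "em_fixed_point H y gamma2 eps2 sigma2 prior q s"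
    and "gamma2 > 0" and "eps2 > 0" and "sigma2 > 0"
  shows "s = Dmat gamma2 eps2 q *v (transpose H *v (y - H *v s))"
proof -
  define d where "d i = (if q i then gamma2 else eps2)" for i
  have d_pos: "d i > 0" for i using assms(2,3) by (simp add: d_def)
  have "s$i + s$i / d i = em_estep H y s $ i" for i
    using d_pos em_fixed_point_minimizes_in_signal[OF assms(1,4)]
    unfolding Dmat_eq_diag_mat d_def[symmetric] by (rule penalized_residual_minimizer)
  then have "s$i / d i = (transpose H *v (y - H *v s))$i" for i
    by (simp add: em_estep_def)
  then have "s$i = d i * (transpose H *v (y - H *v s))$i" for i
    using d_pos[of i] by (metis nonzero_mult_div_cancel_left less_irrefl times_divide_eq_right)
  then show ?thesis
    by (simp add: Dmat_eq_diag_mat diag_mat_mult_vec vec_eq_iff d_def)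
qed

lemma invertible_mat_1_plus_congruence:
  fixes H :: "real^'p::finite^'n::finite" and D :: "real^'p^'p"
  assumes D_psd: "\<And>u. 0 \<le> u \<bullet> (D *v u)"
  shows "invertible (mat 1 + H ** D ** transpose H)"
proof -
  let ?M = "mat 1 + H ** D ** transpose H"
  have "x = 0" if "?M *v x = 0" for x
  proof -
    let ?u = "transpose H *v x"
    have "0 = x \<bullet> (?M *v x)" using that by simp
    also have "\<dots> = x \<bullet> x + x \<bullet> (H *v (D *v ?u))"
      by (simp only: matrix_mul_assoc matrix_vector_mul_assoc matrix_vector_mult_add_rdistrib
          matrix_vector_mul_lid inner_add_right)
    also have "x \<bullet> (H *v (D *v ?u)) = ?u \<bullet> (D *v ?u)"
      by (simp flip: dot_lmul_matrix)
    finally have "x \<bullet> x \<le> 0" using D_psd[of ?u] by linarith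
    then show "x = 0" by (metis inner_eq_zero_iff inner_ge_zero order_antisym)
  qed
  then show ?thesis
    by (simp add: invertible_left_inverse matrix_left_invertible_ker)
qed

theorem theorem1:
  fixes H :: "real^'p::finite^'n::finite"
    and y :: "real^'n"
    and gamma2 eps2 sigma2 Proot PH PL :: real
    and rho kappa L :: nat
    and ups :: "'p \<Rightarrow> nat \<times> nat"
    and q :: "'p \<Rightarrow> bool"
    and s :: "real^'p"
  assumes "CARD('n) \<le> CARD('p)"
    and "rank H = CARD('n)"
    and "onorm (\<lambda>x. H *v x) = 1"
    and "gamma2 > 0" and "eps2 > 0" and "sigma2 > 0"
    and "L \<ge> 1" and "2^L dvd rho" and "2^L dvd kappa"
    and "bij_betw ups UNIV ({1..rho} \<times> {1..kappa})"
    and "0 < Proot" and "Proot < 1" and "0 < PH" and "PH < 1" and "0 < PL" and "PL < 1"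
    and "em_fixed_point H y gamma2 eps2 sigma2
           (markov_tree_prior rho kappa L ups Proot PH PL) q s"
  shows "s = (Dmat gamma2 eps2 q ** transpose H)
               *v (matrix_inv (mat 1 + H ** Dmat gamma2 eps2 q ** transpose H) *v y)"
proof -
  let ?D = "Dmat gamma2 eps2 q"
  let ?M = "mat 1 + H ** ?D ** transpose H"
  define r where "r = y - H *v s"
  have s_eq: "s = ?D *v (transpose H *v r)"
    unfolding r_def using em_fixed_point_signal_eq assms(4-6,17) by blast
  have "?M *v r = r + H *v s"
    unfolding s_eq by (simp only: matrix_mul_assoc matrix_vector_mul_assoc
        matrix_vector_mult_add_rdistrib matrix_vector_mul_lid)
  then have Mr: "?M *v r = y" by (simp add: r_def)
  have "invertible ?M"
    using assms(4,5) by (intro invertible_mat_1_plus_congruence)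
      (simp add: Dmat_eq_diag_mat inner_diag_mat_nonneg less_imp_le)
  then have "matrix_inv ?M *v y = r"
    by (metis Mr invertible_matrix_inv(2) matrix_vector_mul_assoc matrix_vector_mul_lid)
  then show ?thesis
    using s_eq by (simp only: matrix_vector_mul_assoc)
qed

end
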